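(* Let $0<\lambda\le1$, $f\in\mathcal U(\lambda)$ with $f(z)=z+\sum_{k\ge2}a_kz^k$, and suppose $|a_2|=1+\lambda$. Then there is a real $\theta$ such that $f(z)=\dfrac{z}{1-a_2z+\lambda e^{i\theta}z^2}$ for $z\in\mathbb D$; more precisely, there is a real $\phi$ such that $$f(z)=\frac{z}{1-(1+\lambda)e^{i\phi}z+\lambda e^{2i\phi}z^2},\qquad z\in\mathbb D.$$
   Context: $\mathbb D=\{z\in\mathbb C:|z|<1\}$. $\mathcal A$ is the class of functions $f$ analytic in $\mathbb D$ with $f(z)=z+\sum_{k\ge2}a_kz^k$. For $f\in\mathcal A$ with $f(z)\ne0$ for $z\in\mathbb D\setminus\{0\}$, set $U_f(z)=\left(\frac{z}{f(z)}\right)^2f'(z)-1$. For $0<\lambda\le1$, $\mathcal U(\lambda)$ is the class of such $f\in\mathcal A$ with $|U_f(z)|<\lambda$ for all $z\in\mathbb D$. *)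

theory Defs
  imports "HOL-Analysis.Analysis"
begin

definition unit_disc :: "complex set" where
  "unit_disc = ball 0 1"

definition class_A :: "(complex \<Rightarrow> complex) \<Rightarrow> bool" where
  "class_A f \<longleftrightarrow> f holomorphic_on unit_disc \<and> f 0 = 0 \<and> deriv f 0 = 1"

definition taylor_coeff :: "(complex \<Rightarrow> complex) \<Rightarrow> nat \<Rightarrow> complex" where
  "taylor_coeff f k = (deriv ^^ k) f 0 / of_nat (fact k)"

definition U_op :: "(complex \<Rightarrow> complex) \<Rightarrow> complex \<Rightarrow> complex" where
  "U_op f z = (z / f z)^2 * deriv f z - 1"

text \<open>Class U(lambda). The bound is required on the punctured disc: at z = 0 the
  expression z/f(z) is a removable singularity with value 1, so U_f(0) = 0 < lambda
  holds automatically.\<close>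
definition class_U :: "real \<Rightarrow> (complex \<Rightarrow> complex) \<Rightarrow> bool" where
  "class_U lam f \<longleftrightarrow> class_A f \<and> (\<forall>z\<in>unit_disc - {0}. f z \<noteq> 0)
     \<and> (\<forall>z\<in>unit_disc - {0}. cmod (U_op f z) < lam)"

end

theory Submission
  imports Defs "HOL-Complex_Analysis.Complex_Analysis"
begin

text \<open>Write \<open>f z = z / g z\<close> with \<open>g\<close> holomorphic and zero-free in the disc, \<open>g 0 = 1\<close> and
  \<open>g' 0 = -a\<^sub>2\<close>, and \<open>g z = 1 - a\<^sub>2 z + z K z\<close> with \<open>K 0 = 0\<close>. Then \<open>U\<^sub>f = g - z g' - 1 = -z\<^sup>2 K'\<close>,
  so the Schwarz lemma, applied twice, shows that either \<open>K' \<equiv> \<lambda> \<alpha>\<close> with \<open>\<bar>\<alpha>\<bar> = 1\<close>, making \<open>g\<close>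
  the quadratic \<open>1 - a\<^sub>2 z + \<lambda> \<alpha> z\<^sup>2\<close>, or \<open>\<bar>K'\<bar> < \<lambda>\<close>. In the second case \<open>\<bar>K z\<bar> \<le> c \<bar>z\<bar>\<close> with
  \<open>c < \<lambda>\<close>, so the linear term of \<open>g\<close> dominates because \<open>\<bar>a\<^sub>2\<bar> = 1 + \<lambda>\<close>, and Brouwer's fixed
  point theorem produces a zero of \<open>g\<close> in the disc. Finally, a quadratic \<open>1 - a z + \<lambda> c z\<^sup>2\<close>
  without zeros in the disc factors as \<open>(1 - s\<^sub>1 z)(1 - s\<^sub>2 z)\<close> with \<open>\<bar>s\<^sub>1\<bar>, \<bar>s\<^sub>2\<bar> \<le> 1\<close>; together
  with \<open>\<bar>s\<^sub>1 s\<^sub>2\<bar> = \<lambda>\<close> and \<open>\<bar>s\<^sub>1 + s\<^sub>2\<bar> = 1 + \<lambda>\<close> this forces \<open>{\<bar>s\<^sub>1\<bar>, \<bar>s\<^sub>2\<bar>} = {1, \<lambda>}\<close> and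
  \<open>s\<^sub>1, s\<^sub>2\<close> on one ray, whence \<open>a = (1 + \<lambda>) e\<^sup>i\<^sup>\<phi>\<close> and \<open>c = e\<^sup>2\<^sup>i\<^sup>\<phi>\<close>.\<close>

lemma Schwarz_Lemma_strict:
  assumes "f holomorphic_on ball 0 1" and "f 0 = 0" and "cmod (deriv f 0) < 1"
    and "\<And>z. cmod z < 1 \<Longrightarrow> cmod (f z) < 1"
    and "cmod z < 1" and "z \<noteq> 0"
  shows "cmod (f z) < cmod z"
proof -
  have "cmod (f z) \<noteq> cmod z"
  proof
    assume "cmod (f z) = cmod z"
    then obtain \<alpha> where \<alpha>: "\<forall>w. cmod w < 1 \<longrightarrow> f w = \<alpha> * w" and "cmod \<alpha> = 1"
      using Schwarz_Lemma(3)[OF assms(1,2,4)] assms(5,6) by blast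
    have "deriv f 0 = deriv (\<lambda>w. \<alpha> * w) 0"
      by (rule complex_derivative_transform_within_open[of _ "ball 0 1"])
         (use assms(1) \<alpha> in \<open>auto intro!: holomorphic_intros\<close>)
    with \<open>cmod \<alpha> = 1\<close> assms(3) show False
      by simp
  qed
  moreover have "cmod (f z) \<le> cmod z"
    using Schwarz_Lemma(1)[OF assms(1,2,4,5)] .
  ultimately show ?thesis
    by simp
qed

lemma Schwarz_Lemma_factor:
  assumes "V holomorphic_on ball 0 1" and "\<And>z. cmod z < 1 \<Longrightarrow> cmod (z * V z) < 1"
  shows "(\<exists>\<alpha>. cmod \<alpha> = 1 \<and> (\<forall>z. cmod z < 1 \<longrightarrow> V z = \<alpha>))
         \<or> (\<forall>z. cmod z < 1 \<longrightarrow> cmod (V z) < 1)"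
proof -
  define H where "H z = z * V z" for z
  have holH: "H holomorphic_on ball 0 1"
    unfolding H_def using assms(1) by (intro holomorphic_intros)
  have H0: "H 0 = 0"
    by (simp add: H_def)
  have H_bound: "cmod (H z) < 1" if "cmod z < 1" for z
    using assms(2) that by (simp add: H_def)
  have dH0: "deriv H 0 = V 0"
  proof -
    have "(V has_field_derivative deriv V 0) (at 0)"
      using assms(1) by (intro holomorphic_derivI[of _ "ball 0 1"]) auto
    from DERIV_mult[OF DERIV_ident this] show ?thesis
      unfolding H_def by (simp add: DERIV_imp_deriv)
  qed
  have V_le: "cmod (V z) \<le> 1" if z: "cmod z < 1" for z
  proof (cases "z = 0")
    case True
    then show ?thesis
      using Schwarz_Lemma(2)[OF holH H0 H_bound z] dH0 by simp
  next
    case False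
    then show ?thesis
      using Schwarz_Lemma(1)[OF holH H0 H_bound z]
      by (simp add: H_def norm_mult mult_le_cancel_left1)
  qed
  show ?thesis
  proof (cases "\<exists>z. cmod z < 1 \<and> cmod (V z) = 1")
    case True
    then obtain z where z: "cmod z < 1" "cmod (V z) = 1"
      by blast
    have "(\<exists>w. cmod w < 1 \<and> w \<noteq> 0 \<and> cmod (H w) = cmod w) \<or> cmod (deriv H 0) = 1"
      using z dH0 by (cases "z = 0") (auto simp: H_def norm_mult)
    then obtain \<alpha> where \<alpha>: "\<forall>w. cmod w < 1 \<longrightarrow> H w = \<alpha> * w" and "cmod \<alpha> = 1"
      using Schwarz_Lemma(3)[OF holH H0 H_bound] z(1) by blast
    have "deriv H 0 = deriv (\<lambda>w. \<alpha> * w) 0"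
      by (rule complex_derivative_transform_within_open[of _ "ball 0 1"])
         (use holH \<alpha> in \<open>auto intro!: holomorphic_intros\<close>)
    then have "V 0 = \<alpha>"
      using dH0 by simp
    moreover have "V w = \<alpha>" if "cmod w < 1" "w \<noteq> 0" for w
      using \<alpha> that by (auto simp: H_def mult.commute)
    ultimately show ?thesis
      using \<open>cmod \<alpha> = 1\<close> by metis
  next
    case False
    then show ?thesis
      using V_le by force
  qed
qed

lemma Schwarz_Lemma_square:
  assumes "V holomorphic_on ball 0 1" and "\<And>z. cmod z < 1 \<Longrightarrow> cmod (z^2 * V z) < 1"
  shows "(\<exists>\<alpha>. cmod \<alpha> = 1 \<and> (\<forall>z. cmod z < 1 \<longrightarrow> V z = \<alpha>))
         \<or> (\<forall>z. cmod z < 1 \<longrightarrow> cmod (V z) < 1)"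
proof (rule Schwarz_Lemma_factor[OF assms(1)])
  fix z :: complex
  assume z: "cmod z < 1"
  define h where "h w = w^2 * V w" for w
  have hol: "h holomorphic_on ball 0 1"
    unfolding h_def using assms(1) by (intro holomorphic_intros)
  have "(V has_field_derivative deriv V 0) (at 0)"
    using assms(1) by (intro holomorphic_derivI[of _ "ball 0 1"]) auto
  from DERIV_mult[OF DERIV_power[OF DERIV_ident, of 2] this] have "deriv h 0 = 0"
    unfolding h_def by (simp add: DERIV_imp_deriv)
  then have "cmod (h z) < cmod z" if "z \<noteq> 0"
    using Schwarz_Lemma_strict[OF hol _ _ _ z that] assms(2) by (simp add: h_def)
  then show "cmod (z * V z) < 1"
    using z by (cases "z = 0") (auto simp: h_def norm_mult power2_eq_square)
qed

lemma holomorphic_first_order_remainder: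
  fixes g :: "complex \<Rightarrow> complex"
  assumes holg: "g holomorphic_on ball 0 1"
  obtains K where "K holomorphic_on ball 0 1" and "K 0 = 0"
    and "\<And>z. cmod z < 1 \<Longrightarrow> g z = g 0 + deriv g 0 * z + z * K z"
    and "\<And>z. cmod z < 1 \<Longrightarrow> z^2 * deriv K z = z * deriv g z + g 0 - g z"
proof -
  define G where "G z = g z - g 0 - deriv g 0 * z" for z
  have holG: "G holomorphic_on ball 0 1"
    unfolding G_def using holg by (intro holomorphic_intros)
  obtain K where holK: "K holomorphic_on ball 0 1" and GK: "\<And>z. cmod z < 1 \<Longrightarrow> G z = z * K z"
    and dG0: "deriv G 0 = K 0"
    using Schwarz3[OF holG] by (auto simp: G_def)
  have dG: "deriv G z = deriv g z - deriv g 0" if "cmod z < 1" for z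
  proof -
    have "(g has_field_derivative deriv g z) (at z)"
      using holomorphic_derivI[OF holg] that by auto
    from DERIV_diff[OF DERIV_diff[OF this DERIV_const] DERIV_cmult[OF DERIV_ident]]
    show ?thesis
      unfolding G_def[abs_def] by (simp add: DERIV_imp_deriv)
  qed
  have dGK: "deriv G z = K z + z * deriv K z" if "cmod z < 1" for z
  proof -
    have "deriv G z = deriv (\<lambda>w. w * K w) z"
      by (rule complex_derivative_transform_within_open[of _ "ball 0 1"])
         (use holG holK GK that in \<open>auto intro!: holomorphic_intros\<close>)
    also have "\<dots> = K z + z * deriv K z"
      using DERIV_mult[OF DERIV_ident holomorphic_derivI[OF holK, of z]] that
      by (auto simp: DERIV_imp_deriv mult.commute)
    finally show ?thesis .
  qed
  have g_eq: "g z = g 0 + deriv g 0 * z + z * K z" if "cmod z < 1" for z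
    using GK[OF that] by (simp add: G_def algebra_simps)
  have "z^2 * deriv K z = z * deriv g z + g 0 - g z" if "cmod z < 1" for z
  proof -
    have "deriv g z = deriv g 0 + K z + z * deriv K z"
      using dG[OF that] dGK[OF that] by (simp add: algebra_simps)
    then show ?thesis
      unfolding g_eq[OF that] by (simp add: power2_eq_square algebra_simps)
  qed
  moreover have "K 0 = 0"
    using dG0 dG[of 0] by simp
  ultimately show thesis
    using that holK g_eq by blast
qed

lemma holomorphic_constant_deriv_linear:
  fixes K :: "complex \<Rightarrow> complex"
  assumes holK: "K holomorphic_on ball 0 1" and K0: "K 0 = 0"
    and dK: "\<And>z. cmod z < 1 \<Longrightarrow> deriv K z = \<beta>"
    and z: "cmod z < 1"
  shows "K z = \<beta> * z"
proof -
  have "((\<lambda>w. K w - \<beta> * w) has_field_derivative 0) (at w within ball 0 1)"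
    if w: "w \<in> ball 0 1" for w
  proof -
    have "(K has_field_derivative \<beta>) (at w)"
      using holomorphic_derivI[OF holK open_ball w] dK[of w] w by simp
    then have "((\<lambda>w. K w - \<beta> * w) has_field_derivative \<beta> - \<beta> * 1) (at w)"
      by (intro DERIV_diff DERIV_cmult DERIV_ident)
    then show ?thesis
      by (simp add: has_field_derivative_at_within)
  qed
  from has_field_derivative_zero_constant[OF convex_ball this]
  obtain d where d: "\<And>w. w \<in> ball 0 1 \<Longrightarrow> K w - \<beta> * w = d"
    by blast
  have "d = 0"
    using d[of 0] K0 by simp
  with d[of z] z show ?thesis
    by simp
qed

lemma holomorphic_deriv_bound_imp_linear_bound:
  fixes K :: "complex \<Rightarrow> complex"
  assumes holK: "K holomorphic_on ball 0 1" and K0: "K 0 = 0"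
    and bound: "\<And>z. cmod z < 1 \<Longrightarrow> cmod (deriv K z) < B"
  obtains c where "0 \<le> c" and "c < B" and "\<And>z. cmod z < 1 \<Longrightarrow> cmod (K z) \<le> c * cmod z"
proof -
  have half: "cball (0::complex) (1/2) \<subseteq> ball 0 1"
    by auto
  have DK: "(K has_field_derivative deriv K z) (at z within S)" if "cmod z < 1" for z S
    using holomorphic_derivI[OF holK open_ball, of z] that
    by (simp add: has_field_derivative_at_within)
  have "continuous_on (cball 0 (1/2)) (deriv K)"
    using holomorphic_on_subset[OF holomorphic_deriv[OF holK open_ball] half]
    by (rule holomorphic_on_imp_continuous_on)
  then obtain t where t: "t \<in> cball 0 (1/2)"
    and t_max: "\<And>w. w \<in> cball 0 (1/2) \<Longrightarrow> cmod (deriv K w) \<le> cmod (deriv K t)"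
    using continuous_attains_sup[OF compact_cball _ continuous_on_norm[OF \<open>continuous_on _ _\<close>]]
    by auto
  define m where "m = cmod (deriv K t)"
  have "m < B" and "0 \<le> m"
    using bound[of t] t by (auto simp: m_def)
  \<comment> \<open>use \<open>m < B\<close> on the segment from \<open>0\<close> to \<open>z/2\<close> and \<open>B\<close> on the rest,
    which gives a constant uniform in \<open>z\<close>\<close>
  have "cmod (K z) \<le> (m + B) / 2 * cmod z" if z: "cmod z < 1" for z
  proof -
    have "cmod (K (z/2) - K 0) \<le> m * cmod (z/2 - 0)"
    proof (rule field_differentiable_bound[OF convex_cball, of 0 "1/2" K "deriv K"])
      show "(K has_field_derivative deriv K w) (at w within cball 0 (1/2))"
        if "w \<in> cball 0 (1/2)" for w
        using DK[of w] that by simp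
    qed (use z t_max in \<open>auto simp: m_def norm_divide\<close>)
    moreover have "cmod (K z - K (z/2)) \<le> B * cmod (z - z/2)"
    proof (rule field_differentiable_bound[OF convex_ball, of 0 1 K "deriv K"])
      show "(K has_field_derivative deriv K w) (at w within ball 0 1)"
        if "w \<in> ball 0 1" for w
        using DK that by simp
      show "cmod (deriv K w) \<le> B" if "w \<in> ball 0 1" for w
        using bound[of w] that by simp
    qed (use z in \<open>auto simp: norm_divide\<close>)
    moreover have "cmod (z/2) = cmod z / 2" and "cmod (z - z/2) = cmod z / 2"
      by (simp_all add: norm_divide)
    moreover have "cmod (K z) \<le> cmod (K (z/2)) + cmod (K z - K (z/2))"
      using norm_triangle_sub[of "K z" "K (z/2)"] by (simp add: add.commute)
    ultimately show ?thesis
      using K0 by (simp add: field_simps)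
  qed
  with \<open>m < B\<close> \<open>0 \<le> m\<close> show thesis
    by (intro that[of "(m + B) / 2"]) auto
qed

lemma zero_in_disc_if_dominant_linear_term:
  fixes b :: complex and K :: "complex \<Rightarrow> complex"
  assumes contK: "continuous_on (ball 0 1) K"
    and bound: "\<And>z. cmod z < 1 \<Longrightarrow> cmod (K z) \<le> c * cmod z"
    and "0 \<le> c" and "1 + c < cmod b"
  shows "\<exists>z. cmod z < 1 \<and> 1 + b * z + z * K z = 0"
proof -
  \<comment> \<open>a zero is a fixed point of \<open>z \<mapsto> -1 / (b + K z)\<close>, which maps the disc of radius
    \<open>1 / (\<bar>b\<bar> - c)\<close> into itself\<close>
  define r where "r = 1 / (cmod b - c)"
  have r: "0 < r" "r < 1"
    using assms(4) by (auto simp: r_def divide_simps)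
  have r_ball: "cball 0 r \<subseteq> ball (0::complex) 1"
    using r by auto
  have lower: "1 / r \<le> cmod (b + K z)" if "z \<in> cball 0 r" for z
  proof -
    have "cmod (K z) \<le> c * cmod z"
      using bound[of z] that r_ball by auto
    also have "\<dots> \<le> c * r"
      using that \<open>0 \<le> c\<close> by (simp add: mult_left_mono)
    also have "\<dots> \<le> c"
      using r \<open>0 \<le> c\<close> by (simp add: mult_left_le)
    finally show ?thesis
      using norm_triangle_ineq2[of b "- K z"] by (simp add: r_def)
  qed
  define T where "T z = - 1 / (b + K z)" for z
  have nonzero: "b + K z \<noteq> 0" if "z \<in> cball 0 r" for z
    using lower[OF that] r by auto
  have "continuous_on (cball 0 r) T"
    unfolding T_def using nonzero continuous_on_subset[OF contK r_ball]
    by (intro continuous_intros) auto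
  moreover have "T \<in> cball 0 r \<rightarrow> cball 0 r"
  proof
    fix z :: complex
    assume "z \<in> cball 0 r"
    then have "1 / cmod (b + K z) \<le> 1 / (1 / r)"
      using lower r nonzero by (intro divide_left_mono) auto
    then show "T z \<in> cball 0 r"
      by (simp add: T_def norm_divide)
  qed
  ultimately obtain x where x: "x \<in> cball 0 r" and "T x = x"
    using brouwer_ball[OF r(1)] by blast
  then have "b * x + x * K x = - 1"
    using nonzero[OF x] by (simp add: T_def field_simps)
  then have "1 + b * x + x * K x = 0"
    by (simp add: add.assoc)
  with x r(2) show ?thesis
    by (intro exI[of _ x]) auto
qed

lemma quadratic_if_extremal_U_bound:
  fixes g :: "complex \<Rightarrow> complex" and lam :: real
  assumes holg: "g holomorphic_on ball 0 1" and g_nz: "\<And>z. cmod z < 1 \<Longrightarrow> g z \<noteq> 0"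
    and g0: "g 0 = 1" and lam: "0 < lam" and extremal: "cmod (deriv g 0) = 1 + lam"
    and U_bound: "\<And>z. cmod z < 1 \<Longrightarrow> cmod (g z - z * deriv g z - 1) < lam"
  shows "\<exists>c::complex. cmod c = 1 \<and> (\<forall>z. cmod z < 1 \<longrightarrow> g z = 1 + deriv g 0 * z + lam * c * z^2)"
proof -
  obtain K where holK: "K holomorphic_on ball 0 1" and K0: "K 0 = 0"
    and g_eq: "\<And>z. cmod z < 1 \<Longrightarrow> g z = 1 + deriv g 0 * z + z * K z"
    and dK: "\<And>z. cmod z < 1 \<Longrightarrow> z^2 * deriv K z = z * deriv g z + 1 - g z"
    using holomorphic_first_order_remainder[OF holg] g0 by metis
  define V where "V z = deriv K z / lam" for z
  have "V holomorphic_on ball 0 1"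
    unfolding V_def using holK by (intro holomorphic_intros) auto
  moreover have "cmod (z^2 * V z) < 1" if "cmod z < 1" for z
  proof -
    have "z^2 * V z = - (g z - z * deriv g z - 1) / lam"
      unfolding V_def times_divide_eq_right dK[OF that] by (simp add: algebra_simps)
    then have "cmod (z^2 * V z) = cmod (g z - z * deriv g z - 1) / lam"
      using lam by (simp add: norm_divide norm_minus_commute[of 1])
    then show ?thesis
      using U_bound[OF that] lam by (simp add: divide_less_eq)
  qed
  ultimately have "(\<exists>\<alpha>. cmod \<alpha> = 1 \<and> (\<forall>z. cmod z < 1 \<longrightarrow> V z = \<alpha>))
    \<or> (\<forall>z. cmod z < 1 \<longrightarrow> cmod (V z) < 1)"
    by (rule Schwarz_Lemma_square)
  then show ?thesis
  proof
    assume "\<exists>\<alpha>. cmod \<alpha> = 1 \<and> (\<forall>z. cmod z < 1 \<longrightarrow> V z = \<alpha>)"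
    then obtain \<alpha> where "cmod \<alpha> = 1" and V_const: "\<And>z. cmod z < 1 \<Longrightarrow> V z = \<alpha>"
      by blast
    have "deriv K z = lam * \<alpha>" if "cmod z < 1" for z
      using V_const[OF that] lam by (simp add: V_def field_simps)
    then have "K z = lam * \<alpha> * z" if "cmod z < 1" for z
      using holomorphic_constant_deriv_linear[OF holK K0 _ that] by blast
    with g_eq \<open>cmod \<alpha> = 1\<close> show ?thesis
      by (intro exI[of _ \<alpha>]) (simp add: power2_eq_square)
  next
    assume "\<forall>z. cmod z < 1 \<longrightarrow> cmod (V z) < 1"
    then have "cmod (deriv K z) < lam" if "cmod z < 1" for z
      using that lam by (simp add: V_def norm_divide divide_less_eq)
    then obtain c where "0 \<le> c" "c < lam" "\<And>z. cmod z < 1 \<Longrightarrow> cmod (K z) \<le> c * cmod z"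
      using holomorphic_deriv_bound_imp_linear_bound[OF holK K0] by blast
    moreover have "continuous_on (ball 0 1) K"
      using holK by (rule holomorphic_on_imp_continuous_on)
    ultimately obtain z where "cmod z < 1" "1 + deriv g 0 * z + z * K z = 0"
      using zero_in_disc_if_dominant_linear_term[of K c "deriv g 0"] extremal by auto
    then show ?thesis
      using g_nz g_eq by metis
  qed
qed

lemma norm_add_eq_imp_aligned:
  fixes u v :: complex
  assumes "cmod u = 1" and "cmod (u + v) = cmod u + cmod v"
  shows "v = cmod v * u"
proof -
  have "cmod u *\<^sub>R v = cmod v *\<^sub>R u"
    using assms(2) norm_triangle_eq by blast
  then show ?thesis
    using assms(1) by (simp add: scaleR_conv_of_real)
qed

lemma zero_free_quadratic_factorization:
  fixes a b :: complex
  assumes "\<And>z. cmod z < 1 \<Longrightarrow> 1 - a * z + b * z^2 \<noteq> 0"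
  obtains s1 s2 where "s1 + s2 = a" "s1 * s2 = b" "cmod s1 \<le> 1" "cmod s2 \<le> 1"
proof -
  define s where "s = csqrt (a^2 - 4 * b)"
  define s1 where "s1 = (a + s) / 2"
  define s2 where "s2 = (a - s) / 2"
  have sum: "s1 + s2 = a"
    unfolding s1_def s2_def by (simp add: field_simps)
  have "s1 * s2 = (a^2 - s^2) / 4"
    unfolding s1_def s2_def by (simp add: field_simps power2_eq_square)
  then have prod: "s1 * s2 = b"
    unfolding s_def by simp
  have factor: "1 - a * z + b * z^2 = (1 - s1 * z) * (1 - s2 * z)" for z
    by (simp add: algebra_simps power2_eq_square flip: sum prod)
  have "cmod t \<le> 1" if "t = s1 \<or> t = s2" for t
  proof (rule ccontr)
    assume "\<not> cmod t \<le> 1"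
    then have "1 < cmod t"
      by simp
    then have "cmod (1 / t) < 1" and "t \<noteq> 0"
      by (auto simp: norm_divide divide_less_eq)
    moreover have "(1 - s1 * (1 / t)) * (1 - s2 * (1 / t)) = 0"
      using that \<open>t \<noteq> 0\<close> by auto
    ultimately show False
      using assms[of "1 / t"] factor[of "1 / t"] by argo
  qed
  then show thesis
    using that sum prod by blast
qed

lemma zero_free_quadratic_extremal:
  fixes a c :: complex and lam :: real
  assumes "0 < lam" and "cmod a = 1 + lam" and "cmod c = 1"
    and "\<And>z. cmod z < 1 \<Longrightarrow> 1 - a * z + lam * c * z^2 \<noteq> 0"
  shows "\<exists>\<phi>::real. a = (1 + lam) * exp (\<i> * \<phi>) \<and> c = exp (2 * \<i> * \<phi>)"
proof -
  obtain s1 s2 where sum: "s1 + s2 = a" and prod: "s1 * s2 = lam * c"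
    and le1: "cmod s1 \<le> 1" "cmod s2 \<le> 1"
    using zero_free_quadratic_factorization assms(4) by metis
  have norm_prod: "cmod s1 * cmod s2 = lam"
    using prod assms(1,3) by (simp add: norm_mult flip: norm_mult[of s1 s2])
  have "1 + lam \<le> cmod s1 + cmod s2"
    using sum assms(2) norm_triangle_ineq by metis
  moreover have "0 \<le> (1 - cmod s1) * (1 - cmod s2)"
    using le1 by simp
  ultimately have norm_sum: "cmod s1 + cmod s2 = 1 + lam"
    and "(1 - cmod s1) * (1 - cmod s2) = 0"
    using norm_prod by (auto simp: algebra_simps)
  then have unimodular: "cmod s1 = 1 \<or> cmod s2 = 1"
    by simp
  have aligned: "cmod (s1 + s2) = cmod s1 + cmod s2"
    using norm_sum sum assms(2) by simp
  have from_unimodular_root: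
    "\<exists>\<phi>::real. a = (1 + lam) * exp (\<i> * \<phi>) \<and> c = exp (2 * \<i> * \<phi>)"
    if u: "cmod u = 1" and uv: "u + v = a" "u * v = lam * c"
      and "cmod (u + v) = cmod u + cmod v" for u v
  proof -
    have "cmod v = cmod (u * v)"
      using u by (simp add: norm_mult)
    also have "\<dots> = lam"
      using uv(2) assms(1,3) by (simp add: norm_mult)
    finally have "cmod v = lam" .
    with norm_add_eq_imp_aligned[OF u that(4)] have v: "v = lam * u"
      by simp
    have e: "exp (\<i> * Arg u) = u"
      using u complex_norm_eq_1_exp_eq by blast
    have "exp (2 * \<i> * Arg u) = u^2"
      using exp_double[of "\<i> * Arg u"] e by (simp add: mult.assoc)
    moreover have "a = (1 + lam) * u"
      using uv(1) v by (simp add: algebra_simps)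
    moreover have "c = u^2"
    proof -
      have "lam * c = lam * u^2"
        using uv(2) v by (auto simp: power2_eq_square)
      then show ?thesis
        using assms(1) by simp
    qed
    ultimately show ?thesis
      using e by metis
  qed
  from unimodular show ?thesis
  proof
    assume "cmod s1 = 1"
    then show ?thesis
      using from_unimodular_root aligned sum prod by blast
  next
    assume "cmod s2 = 1"
    then show ?thesis
      using from_unimodular_root[of s2 s1] aligned sum prod by (simp add: add.commute mult.commute)
  qed
qed

lemma deriv_deriv_times_ident_0:
  fixes q :: "complex \<Rightarrow> complex"
  assumes holq: "q holomorphic_on S" and S: "open S" "0 \<in> S"
  shows "deriv (deriv (\<lambda>z. z * q z)) 0 = 2 * deriv q 0"
proof -
  have Dq: "(q has_field_derivative deriv q w) (at w)" if "w \<in> S" for w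
    using holomorphic_derivI[OF holq S(1) that] .
  have holdq: "deriv q holomorphic_on S"
    using holomorphic_deriv[OF holq S(1)] .
  have "deriv (\<lambda>z. z * q z) w = q w + w * deriv q w" if "w \<in> S" for w
    using DERIV_mult[OF DERIV_ident Dq[OF that]] by (simp add: DERIV_imp_deriv mult.commute)
  then have "deriv (deriv (\<lambda>z. z * q z)) 0 = deriv (\<lambda>w. q w + w * deriv q w) 0"
    by (intro complex_derivative_transform_within_open[OF _ _ S])
       (use holq holdq S(1) in \<open>auto intro!: holomorphic_intros\<close>)
  also have "\<dots> = 2 * deriv q 0"
    using DERIV_add[OF Dq[OF S(2)] DERIV_mult[OF DERIV_ident holomorphic_derivI[OF holdq S]]]
    by (simp add: DERIV_imp_deriv)
  finally show ?thesis .
qed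

lemma class_A_reciprocal:
  assumes "class_A f" and "\<forall>z\<in>unit_disc - {0}. f z \<noteq> 0"
  obtains g where "g holomorphic_on ball 0 1" and "\<And>z. cmod z < 1 \<Longrightarrow> g z \<noteq> 0"
    and "g 0 = 1" and "deriv g 0 = - taylor_coeff f 2"
    and "\<And>z. cmod z < 1 \<Longrightarrow> f z = z / g z"
proof -
  have holf: "f holomorphic_on ball 0 1" and f0: "f 0 = 0" and df0: "deriv f 0 = 1"
    using assms(1) by (auto simp: class_A_def unit_disc_def)
  define q where "q z = (if z = 0 then deriv f 0 else f z / z)" for z
  have holq: "q holomorphic_on ball 0 1"
    by (rule pole_theorem_open_0[OF holf open_ball, of 0]) (auto simp: q_def f0)
  have f_eq: "f = (\<lambda>z. z * q z)"
    by (auto simp: q_def f0)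
  have q0: "q 0 = 1"
    by (simp add: q_def df0)
  have q_nz: "q z \<noteq> 0" if "cmod z < 1" for z
    using assms(2) q0 that by (cases "z = 0") (auto simp: q_def unit_disc_def)
  have "taylor_coeff f 2 = deriv (deriv f) 0 / 2"
    by (simp add: taylor_coeff_def numeral_2_eq_2)
  also have "\<dots> = deriv q 0"
    unfolding f_eq using deriv_deriv_times_ident_0[OF holq open_ball] by simp
  finally have a2: "taylor_coeff f 2 = deriv q 0" .
  have "((\<lambda>z. inverse (q z)) has_field_derivative - (deriv q 0 * inverse (q 0 ^ 2))) (at 0)"
    using DERIV_inverse_fun[OF holomorphic_derivI[OF holq open_ball] q_nz]
    by (simp add: eval_nat_numeral)
  then have "deriv (\<lambda>z. 1 / q z) 0 = - taylor_coeff f 2"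
    using q0 a2 by (simp add: DERIV_imp_deriv inverse_eq_divide)
  moreover have "(\<lambda>z. 1 / q z) holomorphic_on ball 0 1"
    using holq q_nz by (auto intro!: holomorphic_intros)
  ultimately show thesis
    using that[of "\<lambda>z. 1 / q z"] q_nz q0 f_eq by auto
qed

lemma U_op_eq_reciprocal:
  fixes f g :: "complex \<Rightarrow> complex"
  assumes holg: "g holomorphic_on S" and S: "open S" "z \<in> S"
    and "z \<noteq> 0" and "g z \<noteq> 0" and f_eq: "\<And>w. w \<in> S \<Longrightarrow> f w = w / g w"
  shows "U_op f z = g z - z * deriv g z - 1"
proof -
  have "((\<lambda>w. w / g w) has_field_derivative (g z - z * deriv g z) / (g z)^2) (at z)"
    using DERIV_divide[OF DERIV_ident holomorphic_derivI[OF holg S] \<open>g z \<noteq> 0\<close>]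
    by (simp add: power2_eq_square)
  then have "(f has_field_derivative (g z - z * deriv g z) / (g z)^2) (at z)"
    by (rule has_field_derivative_transform_within_open[OF _ S]) (simp add: f_eq)
  then have "deriv f z = (g z - z * deriv g z) / (g z)^2"
    by (rule DERIV_imp_deriv)
  moreover have "z / f z = g z"
    using f_eq[OF S(2)] assms(4,5) by simp
  ultimately show ?thesis
    using assms(5) by (simp add: U_op_def)
qed

theorem theorem2p2:
  fixes lam :: real and f :: "complex \<Rightarrow> complex"
  assumes "0 < lam" and "lam \<le> 1"
    and "class_U lam f"
    and "cmod (taylor_coeff f 2) = 1 + lam"
  shows "(\<exists>\<theta>::real. \<forall>z\<in>unit_disc.
            f z = z / (1 - taylor_coeff f 2 * z + lam * exp (\<i> * \<theta>) * z^2))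
       \<and> (\<exists>\<phi>::real. \<forall>z\<in>unit_disc.
            f z = z / (1 - (1 + lam) * exp (\<i> * \<phi>) * z + lam * exp (2 * \<i> * \<phi>) * z^2))"
proof -
  define a2 where "a2 = taylor_coeff f 2"
  obtain g where holg: "g holomorphic_on ball 0 1" and g_nz: "\<And>z. cmod z < 1 \<Longrightarrow> g z \<noteq> 0"
    and g0: "g 0 = 1" and dg0: "deriv g 0 = - a2" and f_eq: "\<And>z. cmod z < 1 \<Longrightarrow> f z = z / g z"
    using class_A_reciprocal assms(3) unfolding class_U_def a2_def by metis
  have "cmod (g z - z * deriv g z - 1) < lam" if "cmod z < 1" for z
  proof (cases "z = 0")
    case False
    with assms(3) that have "cmod (U_op f z) < lam"
      by (simp add: class_U_def unit_disc_def)
    with U_op_eq_reciprocal[OF holg open_ball _ False g_nz f_eq] that show ?thesis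
      by simp
  qed (use g0 assms(1) in simp)
  then obtain c :: complex where c: "cmod c = 1"
    and g_eq: "\<And>z. cmod z < 1 \<Longrightarrow> g z = 1 - a2 * z + lam * c * z^2"
    using quadratic_if_extremal_U_bound[OF holg g_nz g0 assms(1)] dg0 assms(4)
    unfolding a2_def by auto
  have "exp (\<i> * Arg c) = c"
    using c complex_norm_eq_1_exp_eq by blast
  then have "\<forall>z\<in>unit_disc. f z = z / (1 - a2 * z + lam * exp (\<i> * Arg c) * z^2)"
    using f_eq g_eq by (simp add: unit_disc_def)
  moreover obtain \<phi> :: real where "a2 = (1 + lam) * exp (\<i> * \<phi>)" and "c = exp (2 * \<i> * \<phi>)"
    using zero_free_quadratic_extremal[OF assms(1) assms(4)[folded a2_def] c] g_nz g_eq by metis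
  then have "\<forall>z\<in>unit_disc.
      f z = z / (1 - (1 + lam) * exp (\<i> * \<phi>) * z + lam * exp (2 * \<i> * \<phi>) * z^2)"
    using f_eq g_eq by (simp add: unit_disc_def)
  ultimately show ?thesis
    unfolding a2_def by blast
qed

end
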